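(* Consider an instance of UBM2SP with harmonious order $\mathcal{L}$, and let $\{\pi_1,\pi_2\}$ be a solution in which both manipulators place $p$ in their highest position. Let $c\in\mathcal{C}$ with $\pi_1(c)=x$ and $\pi_2(c)=y$. Suppose there are integers $x',y'$ such that (1) $x'>x$ and $y'>y$; (2) $SC_{\mathcal{V}}(c)+x'+y'-2<SC_{\mathcal{V}}(p)+2|\mathcal{C}|$; (3) $\mathcal{C}_{\pi_1}(x+1,x')\subseteq\mathcal{C}(\mathcal{L},-c)$ and $\mathcal{C}_{\pi_2}(y+1,y')\subseteq\mathcal{C}(\mathcal{L},-c)$. Define $\pi_1'$ by $\pi_1'(c')=\pi_1(c')$ if $\pi_1(c')>x'$ or $\pi_1(c')<x$; $\pi_1'(c)=x'$; and $\pi_1'(c')=j$ if $x<\pi_1(c')=j+1\le x'$. Define $\pi_2'$ analogously: $\pi_2'(c')=\pi_2(c')$ if $\pi_2(c')>y'$ or $\pi_2(c')<y$; $\pi_2'(c)=y'$; and $\pi_2'(c')=j$ if $y<\pi_2(c')=j+1\le y'$. Then $\{\pi_1',\pi_2'\}$ is also a solution.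
   Context: Borda elections: candidates $\mathcal{C}\cup\{p\}$ ($p\notin\mathcal{C}$); each vote is a bijection $\pi:\mathcal{C}\cup\{p\}\to\{1,\dots,|\mathcal{C}|+1\}$, giving candidate $c$ score $\pi(c)-1$; $SC_{\mathcal{V}}(c)$ denotes the total score of $c$ from the non-manipulator votes $\Pi_{\mathcal{V}}$. $p$ wins iff its total score is strictly higher than that of every other candidate. A vote $\pi$ is coincident with a bijection $\mathcal{L}:\mathcal{C}\cup\{p\}\to\{1,\dots,|\mathcal{C}|+1\}$ if for any three distinct candidates $a,b,c$ with $\mathcal{L}(a)<\mathcal{L}(b)<\mathcal{L}(c)$ or $\mathcal{L}(c)<\mathcal{L}(b)<\mathcal{L}(a)$, $\pi(c)>\pi(b)$ implies $\pi(b)>\pi(a)$. UBM2SP: given candidates $\mathcal{C}\cup\{p\}$, votes $\Pi_{\mathcal{V}}$ all coincident with a given bijection $\mathcal{L}$ (harmonious order), with $p$ not the winner, and two manipulators; a solution is a pair of votes $\{\pi_1,\pi_2\}$, both coincident with $\mathcal{L}$, such that $p$ has strictly higher total score than every candidate of $\mathcal{C}$ with respect to $\Pi_{\mathcal{V}}\uplus\{\pi_1,\pi_2\}$. Notation: $\mathcal{C}_L=\{c\in\mathcal{C}:\mathcal{L}(c)<\mathcal{L}(p)\}$, $\mathcal{C}_R=\{c\in\mathcal{C}:\mathcal{L}(c)>\mathcal{L}(p)\}$; for $c\in\mathcal{C}$, $\mathcal{C}(\mathcal{L},-c)=\mathcal{C}_L$ if $c\in\mathcal{C}_R$ and $=\mathcal{C}_R$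 if $c\in\mathcal{C}_L$. For a vote $\pi$ and integers $x\le x'$, $\mathcal{C}_\pi(x,x')=\{c\in\mathcal{C}\cup\{p\}: x\le\pi(c)\le x'\}$. *)

theory Defs
  imports Main
begin

text \<open>A vote is a function 'a => nat that is a bijection from insert p C onto {1..card C + 1};
  candidate c gets score pi c - 1 from it.\<close>

definition is_vote :: "'a set \<Rightarrow> 'a \<Rightarrow> ('a \<Rightarrow> nat) \<Rightarrow> bool" where
  "is_vote C p \<pi> \<longleftrightarrow> bij_betw \<pi> (insert p C) {1..card C + 1}"

definition coincident :: "'a set \<Rightarrow> ('a \<Rightarrow> nat) \<Rightarrow> ('a \<Rightarrow> nat) \<Rightarrow> bool" where
  "coincident D \<pi> L \<longleftrightarrow>
     (\<forall>a\<in>D. \<forall>b\<in>D. \<forall>c\<in>D. a \<noteq> b \<and> b \<noteq> c \<and> a \<noteq> c \<longrightarrow>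
        (L a < L b \<and> L b < L c \<or> L c < L b \<and> L b < L a) \<longrightarrow>
        \<pi> c > \<pi> b \<longrightarrow> \<pi> b > \<pi> a)"

definition vscore :: "('a \<Rightarrow> nat) \<Rightarrow> 'a \<Rightarrow> int" where
  "vscore \<pi> c = int (\<pi> c) - 1"

definition SC :: "('a \<Rightarrow> nat) list \<Rightarrow> 'a \<Rightarrow> int" where
  "SC V c = (\<Sum>\<pi>\<leftarrow>V. vscore \<pi> c)"

definition ubm2sp_instance :: "'a set \<Rightarrow> 'a \<Rightarrow> ('a \<Rightarrow> nat) \<Rightarrow> ('a \<Rightarrow> nat) list \<Rightarrow> bool" where
  "ubm2sp_instance C p L V \<longleftrightarrow>
     finite C \<and> p \<notin> C \<and> is_vote C p L \<and>
     (\<forall>\<pi>\<in>set V. is_vote C p \<pi> \<and> coincident (insert p C) \<pi> L) \<and>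
     \<not> (\<forall>c\<in>C. SC V p > SC V c)"

definition ubm2sp_solution ::
  "'a set \<Rightarrow> 'a \<Rightarrow> ('a \<Rightarrow> nat) \<Rightarrow> ('a \<Rightarrow> nat) list \<Rightarrow> ('a \<Rightarrow> nat) \<Rightarrow> ('a \<Rightarrow> nat) \<Rightarrow> bool" where
  "ubm2sp_solution C p L V \<pi>1 \<pi>2 \<longleftrightarrow>
     is_vote C p \<pi>1 \<and> is_vote C p \<pi>2 \<and>
     coincident (insert p C) \<pi>1 L \<and> coincident (insert p C) \<pi>2 L \<and>
     (\<forall>c\<in>C. SC V p + vscore \<pi>1 p + vscore \<pi>2 p > SC V c + vscore \<pi>1 c + vscore \<pi>2 c)"

definition C_L :: "'a set \<Rightarrow> 'a \<Rightarrow> ('a \<Rightarrow> nat) \<Rightarrow> 'a set" where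
  "C_L C p L = {c\<in>C. L c < L p}"

definition C_R :: "'a set \<Rightarrow> 'a \<Rightarrow> ('a \<Rightarrow> nat) \<Rightarrow> 'a set" where
  "C_R C p L = {c\<in>C. L c > L p}"

definition C_opp :: "'a set \<Rightarrow> 'a \<Rightarrow> ('a \<Rightarrow> nat) \<Rightarrow> 'a \<Rightarrow> 'a set" where
  "C_opp C p L c = (if c \<in> C_R C p L then C_L C p L else C_R C p L)"

definition C_pos :: "'a set \<Rightarrow> 'a \<Rightarrow> ('a \<Rightarrow> nat) \<Rightarrow> nat \<Rightarrow> nat \<Rightarrow> 'a set" where
  "C_pos C p \<pi> x x' = {d \<in> insert p C. x \<le> \<pi> d \<and> \<pi> d \<le> x'}"

text \<open>Moving c from position x = pi c up to position x', shifting the ones in between down by one.\<close>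
definition shift_vote :: "('a \<Rightarrow> nat) \<Rightarrow> 'a \<Rightarrow> nat \<Rightarrow> nat \<Rightarrow> 'a \<Rightarrow> nat" where
  "shift_vote \<pi> c x x' = (\<lambda>d. if d = c then x'
                              else if x < \<pi> d \<and> \<pi> d \<le> x' then \<pi> d - 1 else \<pi> d)"

end

theory Submission
  imports Defs
begin

text \<open>Moving c from x up to x' and the candidates in between down by one is the vote followed
  by a cyclic permutation of the positions, so it is again a vote; it keeps all candidates other
  than c in their relative order and never raises them. With p on top, coincidence with L just says
  that positions strictly decrease when walking away from p along L, and this survives because c
  only jumps over candidates on the other side of p. So both new votes are coincident, p keeps its
  score, no other candidate gains, and c's new score is bounded by assumption (2).\<close>

definition cycle_up :: "nat \<Rightarrow> nat \<Rightarrow> nat \<Rightarrow> nat" where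
  "cycle_up x x' i = (if i = x then x' else if x < i \<and> i \<le> x' then i - 1 else i)"

lemma inj_cycle_up: "x \<le> x' \<Longrightarrow> inj (cycle_up x x')"
  unfolding cycle_up_def by (rule injI) (simp split: if_splits; linarith)

lemma bij_betw_cycle_up:
  assumes "1 \<le> x" "x \<le> x'" "x' \<le> m"
  shows "bij_betw (cycle_up x x') {1..m} {1..m}"
proof -
  have into: "cycle_up x x' ` {1..m} \<subseteq> {1..m}"
    using assms by (auto simp: cycle_up_def)
  have inj: "inj_on (cycle_up x x') {1..m}"
    using inj_cycle_up[OF assms(2)] by (rule inj_on_subset) simp
  show ?thesis
    unfolding bij_betw_def using inj endo_inj_surj[OF finite_atLeastAtMost into inj] by blast
qed

lemma cycle_up_less:
  "i < j \<Longrightarrow> i \<noteq> x \<Longrightarrow> j \<noteq> x \<Longrightarrow> cycle_up x x' i < cycle_up x x' j"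
  by (auto simp: cycle_up_def)

lemma shift_vote_eq_cycle_up:
  assumes "inj_on \<pi> D" "c \<in> D" "d \<in> D" "\<pi> c = x"
  shows "shift_vote \<pi> c x x' d = cycle_up x x' (\<pi> d)"
  using assms inj_on_eq_iff[OF assms(1,2,3)]
  by (auto simp: shift_vote_def cycle_up_def)

lemma is_vote_shift_vote:
  assumes vote: "is_vote C p \<pi>" and c: "c \<in> insert p C" "\<pi> c = x"
    and "x \<le> x'" "x' \<le> card C + 1"
  shows "is_vote C p (shift_vote \<pi> c x x')"
proof -
  have bij: "bij_betw \<pi> (insert p C) {1..card C + 1}"
    using vote by (simp add: is_vote_def)
  then have "1 \<le> x"
    using c by (auto dest: bij_betw_apply)
  with assms have "bij_betw (cycle_up x x') {1..card C + 1} {1..card C + 1}"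
    by (intro bij_betw_cycle_up)
  with bij have "bij_betw (cycle_up x x' \<circ> \<pi>) (insert p C) {1..card C + 1}"
    by (rule bij_betw_trans)
  moreover have "shift_vote \<pi> c x x' d = (cycle_up x x' \<circ> \<pi>) d" if "d \<in> insert p C" for d
    using shift_vote_eq_cycle_up[OF bij_betw_imp_inj_on[OF bij] c(1) that c(2)] by simp
  ultimately show ?thesis
    unfolding is_vote_def by (rule bij_betw_cong[THEN iffD2, rotated])
qed

definition single_peaked_at :: "'a set \<Rightarrow> ('a \<Rightarrow> nat) \<Rightarrow> 'a \<Rightarrow> ('a \<Rightarrow> nat) \<Rightarrow> bool" where
  "single_peaked_at D L p \<pi> \<longleftrightarrow>
     (\<forall>a\<in>D. \<forall>b\<in>D. a \<noteq> b \<longrightarrow> (L a < L b \<and> L b \<le> L p \<or> L p \<le> L b \<and> L b < L a) \<longrightarrow> \<pi> a < \<pi> b)"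

lemma single_peaked_imp_coincident:
  assumes "single_peaked_at D L p \<pi>"
  shows "coincident D \<pi> L"
  unfolding coincident_def
proof (intro ballI impI)
  fix a b e assume D: "a \<in> D" "b \<in> D" "e \<in> D" and ne: "a \<noteq> b \<and> b \<noteq> e \<and> a \<noteq> e"
    and between: "L a < L b \<and> L b < L e \<or> L e < L b \<and> L b < L a" and "\<pi> e > \<pi> b"
  have towards_b: "\<pi> u < \<pi> b"
    if "u \<in> D" "u \<noteq> b" "L u < L b \<and> L b \<le> L p \<or> L p \<le> L b \<and> L b < L u" for u
    using assms that D(2) unfolding single_peaked_at_def by blast
  \<comment> \<open>b lies between a and e, so one of them is farther from p than b.\<close>
  have "\<pi> a < \<pi> b \<or> \<pi> e < \<pi> b"
    using towards_b[OF D(1)] towards_b[OF D(3)] ne between by (cases "L b \<le> L p") auto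
  with \<open>\<pi> e > \<pi> b\<close> show "\<pi> b > \<pi> a" by simp
qed

text \<open>The converse needs p on top: then p is the third candidate witnessing coincidence.\<close>

lemma coincident_imp_single_peaked:
  assumes co: "coincident D \<pi> L" and inj: "inj_on \<pi> D" "inj_on L D" and p: "p \<in> D"
    and top: "\<forall>d\<in>D. \<pi> d \<le> \<pi> p"
  shows "single_peaked_at D L p \<pi>"
  unfolding single_peaked_at_def
proof (intro ballI impI)
  fix a b assume D: "a \<in> D" "b \<in> D" and "a \<noteq> b"
    and towards: "L a < L b \<and> L b \<le> L p \<or> L p \<le> L b \<and> L b < L a"
  have below_top: "\<pi> d < \<pi> p" if "d \<in> D" "d \<noteq> p" for d
    using top inj_on_eq_iff[OF inj(1) that(1) p] that le_neq_implies_less by blast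
  have "a \<noteq> p" using towards by auto
  show "\<pi> a < \<pi> b"
  proof (cases "b = p")
    case True
    then show ?thesis using below_top D \<open>a \<noteq> p\<close> by simp
  next
    case False
    then have "L b \<noteq> L p" using inj_on_eq_iff[OF inj(2) D(2) p] by simp
    then have "L a < L b \<and> L b < L p \<or> L p < L b \<and> L b < L a" using towards by auto
    with co D p False \<open>a \<noteq> b\<close> \<open>a \<noteq> p\<close> below_top[OF D(2) False] show ?thesis
      unfolding coincident_def by blast
  qed
qed

lemma single_peaked_shift_vote:
  assumes sp: "single_peaked_at (insert p C) L p \<pi>" and inj: "inj_on \<pi> (insert p C)"
    and c: "c \<in> C" "\<pi> c = x" and "x < x'" and "x' < \<pi> p"
    and jumped: "C_pos C p \<pi> (x + 1) x' \<subseteq> C_opp C p L c"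
  shows "single_peaked_at (insert p C) L p (shift_vote \<pi> c x x')"
  unfolding single_peaked_at_def
proof (intro ballI impI)
  let ?D = "insert p C"
  let ?s = "shift_vote \<pi> c x x'"
  fix a b assume D: "a \<in> ?D" "b \<in> ?D" and "a \<noteq> b"
    and towards: "L a < L b \<and> L b \<le> L p \<or> L p \<le> L b \<and> L b < L a"
  have less: "\<pi> a < \<pi> b" using sp D \<open>a \<noteq> b\<close> towards unfolding single_peaked_at_def by blast
  have s: "?s d = cycle_up x x' (\<pi> d)" if "d \<in> ?D" for d
    using shift_vote_eq_cycle_up[OF inj _ that] c by simp
  have off_c: "\<pi> d \<noteq> x" if "d \<in> ?D" "d \<noteq> c" for d
    using inj_on_eq_iff[OF inj that(1)] c that by auto
  consider "a = c" | "b = c" | "a \<noteq> c" "b \<noteq> c" by blast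
  then show "?s a < ?s b"
  proof cases
    case 1
    \<comment> \<open>b lies on c's side of p, so c does not jump over it.\<close>
    have "x' < \<pi> b"
    proof (cases "b = p")
      case False
      with D(2) have "b \<in> C" by simp
      with 1 towards c(1) have "b \<notin> C_opp C p L c"
        unfolding C_opp_def C_L_def C_R_def by auto
      with jumped \<open>b \<in> C\<close> have "\<not> (x + 1 \<le> \<pi> b \<and> \<pi> b \<le> x')"
        unfolding C_pos_def by blast
      with less 1 c(2) show ?thesis by simp
    qed (use \<open>x' < \<pi> p\<close> in simp)
    with 1 \<open>a \<noteq> b\<close> show ?thesis by (simp add: shift_vote_def)
  next
    case 2
    with less c(2) \<open>x < x'\<close> \<open>a \<noteq> b\<close> show ?thesis by (simp add: shift_vote_def)
  next
    case 3
    with less s D off_c show ?thesis by (simp add: cycle_up_less)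
  qed
qed

lemma shift_vote_of_top_vote:
  assumes inst: "ubm2sp_instance C p L V" and vote: "is_vote C p \<pi>"
    and co: "coincident (insert p C) \<pi> L" and top: "\<pi> p = card C + 1"
    and c: "c \<in> C" "\<pi> c = x" and "x < x'"
    and jumped: "C_pos C p \<pi> (x + 1) x' \<subseteq> C_opp C p L c"
  shows "is_vote C p (shift_vote \<pi> c x x')"
    and "coincident (insert p C) (shift_vote \<pi> c x x') L"
    and "shift_vote \<pi> c x x' p = card C + 1"
    and "\<And>d. d \<in> C \<Longrightarrow> d \<noteq> c \<Longrightarrow> shift_vote \<pi> c x x' d \<le> \<pi> d"
proof -
  have "p \<notin> C" and "inj_on L (insert p C)"
    using inst by (auto simp: ubm2sp_instance_def is_vote_def bij_betw_def)
  have bij: "bij_betw \<pi> (insert p C) {1..card C + 1}"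
    using vote by (simp add: is_vote_def)
  then have inj: "inj_on \<pi> (insert p C)" by (rule bij_betw_imp_inj_on)
  have range: "\<pi> d \<le> card C + 1" if "d \<in> insert p C" for d
    using bij_betw_apply[OF bij that] by simp
  have "p \<notin> C_opp C p L c"
    using \<open>p \<notin> C\<close> by (auto simp: C_opp_def C_L_def C_R_def)
  with jumped have "p \<notin> C_pos C p \<pi> (x + 1) x'" by blast
  moreover have "x < \<pi> p"
  proof -
    have "c \<noteq> p" using c(1) \<open>p \<notin> C\<close> by blast
    then have "\<pi> c \<noteq> \<pi> p" using inj_on_eq_iff[OF inj] c(1) by simp
    with range[of c] top c show ?thesis by simp
  qed
  ultimately have "x' < \<pi> p"
    by (auto simp: C_pos_def)
  then show "is_vote C p (shift_vote \<pi> c x x')"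
    using is_vote_shift_vote[OF vote] c \<open>x < x'\<close> top by simp
  from \<open>x' < \<pi> p\<close> \<open>p \<notin> C\<close> c(1) show "shift_vote \<pi> c x x' p = card C + 1"
    using top by (auto simp: shift_vote_def)
  have "single_peaked_at (insert p C) L p \<pi>"
    using coincident_imp_single_peaked[OF co inj \<open>inj_on L _\<close>] range top by simp
  then have "single_peaked_at (insert p C) L p (shift_vote \<pi> c x x')"
    by (rule single_peaked_shift_vote[OF _ inj c \<open>x < x'\<close> \<open>x' < \<pi> p\<close> jumped])
  then show "coincident (insert p C) (shift_vote \<pi> c x x') L"
    by (rule single_peaked_imp_coincident)
  show "shift_vote \<pi> c x x' d \<le> \<pi> d" if "d \<in> C" "d \<noteq> c" for d
    using that by (simp add: shift_vote_def)
qed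

theorem mainTheorem7:
  fixes C :: "'a set" and p :: 'a and L :: "'a \<Rightarrow> nat" and V :: "('a \<Rightarrow> nat) list"
    and \<pi>1 \<pi>2 :: "'a \<Rightarrow> nat" and c :: 'a and x y x' y' :: nat
  assumes inst: "ubm2sp_instance C p L V"
    and sol: "ubm2sp_solution C p L V \<pi>1 \<pi>2"
    and top1: "\<pi>1 p = card C + 1" and top2: "\<pi>2 p = card C + 1"
    and cC: "c \<in> C" and hx: "\<pi>1 c = x" and hy: "\<pi>2 c = y"
    and c1: "x' > x" "y' > y"
    and c2: "SC V c + int x' + int y' - 2 < SC V p + 2 * int (card C)"
    and c3: "C_pos C p \<pi>1 (x + 1) x' \<subseteq> C_opp C p L c"
            "C_pos C p \<pi>2 (y + 1) y' \<subseteq> C_opp C p L c"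
  shows "ubm2sp_solution C p L V (shift_vote \<pi>1 c x x') (shift_vote \<pi>2 c y y')"
proof -
  let ?\<sigma>1 = "shift_vote \<pi>1 c x x'" and ?\<sigma>2 = "shift_vote \<pi>2 c y y'"
  have v: "is_vote C p \<pi>1" "is_vote C p \<pi>2"
    and co: "coincident (insert p C) \<pi>1 L" "coincident (insert p C) \<pi>2 L"
    and wins: "\<And>d. d \<in> C \<Longrightarrow> SC V d + vscore \<pi>1 d + vscore \<pi>2 d < SC V p + vscore \<pi>1 p + vscore \<pi>2 p"
    using sol by (auto simp: ubm2sp_solution_def)
  note new1 = shift_vote_of_top_vote[OF inst v(1) co(1) top1 cC hx c1(1) c3(1)]
  note new2 = shift_vote_of_top_vote[OF inst v(2) co(2) top2 cC hy c1(2) c3(2)]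
  have "SC V d + vscore ?\<sigma>1 d + vscore ?\<sigma>2 d < SC V p + vscore ?\<sigma>1 p + vscore ?\<sigma>2 p"
    if "d \<in> C" for d
  proof (cases "d = c")
    case True
    have "?\<sigma>1 c = x'" "?\<sigma>2 c = y'" by (simp_all add: shift_vote_def)
    with True c2 new1(3) new2(3) show ?thesis by (simp add: vscore_def)
  next
    case False
    from new1(4)[OF that False] new2(4)[OF that False]
    have "vscore ?\<sigma>1 d + vscore ?\<sigma>2 d \<le> vscore \<pi>1 d + vscore \<pi>2 d"
      by (simp add: vscore_def)
    moreover have "vscore ?\<sigma>1 p = vscore \<pi>1 p" "vscore ?\<sigma>2 p = vscore \<pi>2 p"
      using new1(3) new2(3) top1 top2 by (simp_all add: vscore_def)
    ultimately show ?thesis using wins[OF that] by linarith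
  qed
  with new1(1,2) new2(1,2) show ?thesis by (simp add: ubm2sp_solution_def)
qed

end
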